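(* Let $n\ge 3$ be an integer, $\varepsilon=e^{2\pi i/n}$, and let $a\in\mathbb{C}\setminus\{0,-1,-2,\dots\}$. Then for every $x\in\mathbb{C}$, $$\prod_{k=0}^{n-1}\frac{G(a-\varepsilon^k x)}{G(a)}=\prod_{m=0}^\infty\Bigl(1-\frac{x^n}{(a+m)^n}\Bigr)^{m+1},$$ the infinite product converging uniformly on compact subsets of $\mathbb{C}$.
   Context: $G$ is the entire function defined by $G(1+x)=(2\pi)^{x/2}\exp\bigl(-\tfrac{x(x+1)}{2}-\tfrac{\gamma x^2}{2}\bigr)\prod_{n=1}^\infty(1+\tfrac xn)^n\exp(-x+\tfrac{x^2}{2n})$, $\gamma$ the Euler constant; its zeros are at $x=-j$, $j=0,1,2,\dots$, with multiplicity $j+1$. *)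

theory Defs
  imports "HOL-Analysis.Analysis"
begin

definition barnesG :: "complex \<Rightarrow> complex" where
  "barnesG z = (let x = z - 1 in
     exp (x / 2 * of_real (ln (2 * pi)))
     * exp (- (x * (x + 1)) / 2 - of_real euler_mascheroni * x\<^sup>2 / 2)
     * (\<Prod>k. (1 + x / of_nat (Suc k)) ^ Suc k
              * exp (- x + x\<^sup>2 / (2 * of_nat (Suc k)))))"

end

theory Submission
  imports Defs "HOL-Complex_Analysis.Complex_Analysis" "HOL-Computational_Algebra.Polynomial"
begin

text \<open>Write \<open>G(1 + y) = E(y) \<Prod>\<^sub>m F\<^sub>m(y)\<close>, where \<open>E\<close> is the exponential of a quadratic
  polynomial and \<open>F\<^sub>m(y) = E\<^sub>2(-y/(m+1))\<^sup>m\<^sup>+\<^sup>1\<close> is a power of a Weierstrass factor of genus 2.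
  Put \<open>y = a - 1\<close> and let \<open>\<zeta>\<close> be a primitive \<open>n\<close>-th root of unity. Since \<open>n \<ge> 3\<close>, both
  \<open>\<Sum>\<^sub>k \<zeta>\<^sup>k\<close> and \<open>\<Sum>\<^sub>k \<zeta>\<^sup>2\<^sup>k\<close> vanish, so the product of any \<open>exp (quadratic)\<close> over the points
  \<open>y - \<zeta>\<^sup>k x\<close> equals its \<open>n\<close>-th power at \<open>y\<close>. Hence the prefactor \<open>E\<close> and the exponential parts of
  the \<open>F\<^sub>m\<close> cancel in \<open>\<Prod>\<^sub>k G(a - \<zeta>\<^sup>k x)/G(a)\<close>, and what is left of the \<open>m\<close>-th factor is
  \<open>(\<Prod>\<^sub>k (1 - \<zeta>\<^sup>k x/(a+m)))\<^sup>m\<^sup>+\<^sup>1 = (1 - x\<^sup>n/(a+m)\<^sup>n)\<^sup>m\<^sup>+\<^sup>1\<close>. Uniform convergence on compact sets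
  is the Weierstrass M-test: as \<open>n \<ge> 3\<close>, these factors differ from 1 by \<open>O(m\<^sup>-\<^sup>2)\<close>.\<close>

definition unity_root :: "nat \<Rightarrow> complex" where
  "unity_root n = exp (2 * of_real pi * \<i> / of_nat n)"

lemma unity_root_power: "unity_root n ^ j = exp (2 * of_real pi * \<i> * of_nat j / of_nat n)"
  by (simp add: unity_root_def exp_of_nat_mult[symmetric] mult_ac)

lemma unity_root_power_self: "n > 0 \<Longrightarrow> unity_root n ^ n = 1"
  using complex_root_unity[of n n] by (simp add: unity_root_power)

lemma unity_root_power_eq_1_iff: "n > 0 \<Longrightarrow> unity_root n ^ j = 1 \<longleftrightarrow> n dvd j"
  using complex_root_unity_eq_1[of n j] by (simp add: unity_root_power)

lemma unity_root_power_power_self: "n > 0 \<Longrightarrow> (unity_root n ^ j) ^ n = 1"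
  by (metis power_mult mult.commute power_one unity_root_power_self)

lemma inj_on_unity_root_power: "n > 0 \<Longrightarrow> inj_on (\<lambda>k. unity_root n ^ k) {..<n}"
  unfolding inj_on_def unity_root_power using complex_root_unity_eq[of n] by auto

lemma sum_unity_root_power:
  assumes "n > 0" "\<not> n dvd j"
  shows "(\<Sum>k<n. (unity_root n ^ j) ^ k) = 0"
  using sum_gp_strict[of "unity_root n ^ j" n] assms
  by (simp add: unity_root_power_eq_1_iff unity_root_power_power_self)

lemma prod_monic_linear_unity_root:
  assumes "n > 0"
  shows "(\<Prod>k<n. [:- (unity_root n ^ k), 1:]) = monom 1 n - 1" (is "?p = ?q")
proof (rule poly_eqI_degree_lead_coeff[where n = n and A = "(\<lambda>k. unity_root n ^ k) ` {..<n}"])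
  have "degree ?p = n" by (subst degree_prod_sum_eq) auto
  moreover have "lead_coeff ?p = 1" by (simp add: lead_coeff_prod)
  ultimately show "coeff ?p n = coeff ?q n" "degree ?p \<le> n" using assms by simp_all
  show "n \<le> card ((\<lambda>k. unity_root n ^ k) ` {..<n})"
    using inj_on_unity_root_power[OF assms] by (simp add: card_image)
  show "degree ?q \<le> n"
    by (intro degree_diff_le) (auto simp: degree_monom_le)
  fix z assume "z \<in> (\<lambda>k. unity_root n ^ k) ` {..<n}"
  then obtain j where "j < n" "z = unity_root n ^ j" by auto
  then show "poly ?p z = poly ?q z"
    using unity_root_power_power_self[OF assms, of j]
    by (auto simp: poly_prod poly_monom intro!: prod_zero bexI[of _ j])
qed

lemma prod_sub_unity_root_mult:
  assumes "n > 0"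
  shows "(\<Prod>k<n. c - unity_root n ^ k * x) = c ^ n - x ^ n"
proof (cases "x = 0")
  case True
  then show ?thesis using assms by (simp add: power_0_left)
next
  case False
  have "(\<Prod>k<n. c - unity_root n ^ k * x) = (\<Prod>k<n. x * (c / x - unity_root n ^ k))"
    using False by (intro prod.cong) (auto simp: field_simps)
  also have "\<dots> = x ^ n * poly (\<Prod>k<n. [:- (unity_root n ^ k), 1:]) (c / x)"
    by (simp add: prod.distrib poly_prod)
  also have "\<dots> = c ^ n - x ^ n"
    using False by (simp add: prod_monic_linear_unity_root[OF assms] poly_monom field_simps power_divide)
  finally show ?thesis .
qed

lemma sum_quadratic_unity_root:
  assumes "n \<ge> 3"
  shows "(\<Sum>k<n. \<alpha> * (y - unity_root n ^ k * x) + \<beta> * (y - unity_root n ^ k * x)\<^sup>2)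
       = of_nat n * (\<alpha> * y + \<beta> * y\<^sup>2)"
proof -
  define \<zeta> where "\<zeta> = unity_root n"
  have "\<not> n dvd 1" "\<not> n dvd 2" using assms by (auto dest!: dvd_imp_le)
  then have sums: "(\<Sum>k<n. \<zeta> ^ k) = 0" "(\<Sum>k<n. (\<zeta> ^ 2) ^ k) = 0"
    using sum_unity_root_power[of n 1] sum_unity_root_power[of n 2] assms by (simp_all add: \<zeta>_def)
  have "\<alpha> * (y - \<zeta> ^ k * x) + \<beta> * (y - \<zeta> ^ k * x)\<^sup>2
      = (\<alpha> * y + \<beta> * y\<^sup>2) - ((\<alpha> + 2 * \<beta> * y) * x) * \<zeta> ^ k + (\<beta> * x\<^sup>2) * (\<zeta> ^ 2) ^ k" for k
    by (simp add: power2_eq_square power_mult_distrib algebra_simps)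
  then have "(\<Sum>k<n. \<alpha> * (y - \<zeta> ^ k * x) + \<beta> * (y - \<zeta> ^ k * x)\<^sup>2)
      = of_nat n * (\<alpha> * y + \<beta> * y\<^sup>2) - ((\<alpha> + 2 * \<beta> * y) * x) * (\<Sum>k<n. \<zeta> ^ k)
        + (\<beta> * x\<^sup>2) * (\<Sum>k<n. (\<zeta> ^ 2) ^ k)"
    by (simp add: sum.distrib sum_subtractf sum_distrib_left)
  then show ?thesis by (simp add: sums flip: \<zeta>_def)
qed

lemma prod_exp_quadratic_unity_root:
  assumes "n \<ge> 3"
  shows "(\<Prod>k<n. exp (\<alpha> * (y - unity_root n ^ k * x) + \<beta> * (y - unity_root n ^ k * x)\<^sup>2))
       = exp (\<alpha> * y + \<beta> * y\<^sup>2) ^ n"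
  by (simp add: exp_sum[symmetric] sum_quadratic_unity_root[OF assms] exp_of_nat_mult)

lemma norm_power_sub_one_le: "norm ((w::complex) ^ k - 1) \<le> (1 + norm (w - 1)) ^ k - 1"
proof (induction k)
  case 0
  then show ?case by simp
next
  case (Suc k)
  have "norm w \<le> 1 + norm (w - 1)" using norm_triangle_ineq[of "w - 1" 1] by simp
  have "w ^ Suc k - 1 = w * (w ^ k - 1) + (w - 1)" by (simp add: algebra_simps)
  then have "norm (w ^ Suc k - 1) \<le> norm w * norm (w ^ k - 1) + norm (w - 1)"
    by (metis norm_mult norm_triangle_ineq)
  also have "\<dots> \<le> (1 + norm (w - 1)) * ((1 + norm (w - 1)) ^ k - 1) + norm (w - 1)"
    using Suc \<open>norm w \<le> _\<close> by (intro add_mono mult_mono) auto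
  also have "\<dots> = (1 + norm (w - 1)) ^ Suc k - 1" by (simp add: algebra_simps)
  finally show ?case .
qed

lemma exp_minus_one_le: "(t::real) \<ge> 0 \<Longrightarrow> exp t - 1 \<le> t * exp t"
  using mult_right_mono[OF exp_ge_add_one_self[of "- t"], of "exp t"]
  by (simp add: algebra_simps exp_minus_inverse)

lemma norm_power_sub_one_le_inverse_square:
  assumes "norm ((w::complex) - 1) \<le> B / real k ^ 3" "B \<ge> 0" "k \<ge> 1"
  shows "norm (w ^ k - 1) \<le> B * exp B / (real k)\<^sup>2"
proof -
  define d where "d = norm (w - 1)"
  have k: "real k \<ge> 1" using assms by simp
  have "real k * d \<le> real k * (B / real k ^ 3)"
    using assms(1) k by (intro mult_left_mono) (auto simp: d_def)
  also have "\<dots> = B / real k ^ 2"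
    using k by (simp add: field_simps power3_eq_cube power2_eq_square)
  finally have kd: "real k * d \<le> B / real k ^ 2" .
  have "B / real k ^ 2 \<le> B"
    using k assms(2) by (simp add: divide_le_eq mult_le_cancel_left1 one_le_power)
  have "norm (w ^ k - 1) \<le> (1 + d) ^ k - 1" unfolding d_def by (rule norm_power_sub_one_le)
  also have "(1 + d) ^ k \<le> exp d ^ k"
    by (intro power_mono) (auto simp: d_def exp_ge_add_one_self add.commute)
  also have "exp d ^ k - 1 \<le> (real k * d) * exp (real k * d)"
    using exp_minus_one_le[of "real k * d"] by (simp add: d_def exp_of_nat_mult)
  also have "\<dots> \<le> (B / real k ^ 2) * exp B"
    using kd \<open>B / real k ^ 2 \<le> B\<close> assms(2) by (intro mult_mono) (auto simp: d_def)
  finally show ?thesis by simp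
qed

lemma summable_const_divide_Suc_square: "summable (\<lambda>m. C / (real (Suc m))\<^sup>2)"
proof -
  have "summable (\<lambda>m. 1 / real ((m + 1)\<^sup>2))" using inverse_squares_sums by (rule sums_summable)
  then have "summable (\<lambda>m. C * (1 / real ((m + 1)\<^sup>2)))" by (rule summable_mult)
  then show ?thesis by (simp add: add.commute)
qed

lemma eventually_le_real_sequentially: "eventually (\<lambda>m. c \<le> real m) sequentially"
  using filterlim_real_sequentially unfolding filterlim_at_top by blast

lemma uniform_limit_prod_Weierstrass_M:
  fixes f :: "nat \<Rightarrow> complex \<Rightarrow> complex"
  assumes "compact K" and "\<And>m. continuous_on K (f m)"
    and "eventually (\<lambda>m. \<forall>x\<in>K. norm (f m x - 1) \<le> M m) sequentially" and "summable M"
    and "\<And>x. x \<in> K \<Longrightarrow> (\<lambda>m. f m x) has_prod h x"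
  shows "uniform_limit K (\<lambda>N x. \<Prod>m<N. f m x) h sequentially"
proof -
  have "uniformly_convergent_on K (\<lambda>N x. \<Sum>m<N. norm (f m x - 1))"
    using assms(3) by (intro Weierstrass_m_test'_ev[OF _ assms(4)]) simp
  then have "uniformly_convergent_on K (\<lambda>N x. \<Prod>m<N. f m x)"
    by (rule uniformly_convergent_on_prod'[OF assms(2,1)])
  then obtain g where g: "uniform_limit K (\<lambda>N x. \<Prod>m<N. f m x) g sequentially"
    unfolding uniformly_convergent_on_def by blast
  moreover have "g x = h x" if "x \<in> K" for x
    using tendsto_uniform_limitI[OF g that] has_prod_imp_tendsto'[OF assms(5)[OF that]]
    by (rule LIMSEQ_unique)
  ultimately show ?thesis
    using uniform_limit_cong'[of K "\<lambda>N x. \<Prod>m<N. f m x" "\<lambda>N x. \<Prod>m<N. f m x" g h] by simp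
qed

definition barnesG_prefactor :: "complex \<Rightarrow> complex" where
  "barnesG_prefactor y = exp (y / 2 * of_real (ln (2 * pi)))
     * exp (- (y * (y + 1)) / 2 - of_real euler_mascheroni * y\<^sup>2 / 2)"

definition barnesG_factor :: "nat \<Rightarrow> complex \<Rightarrow> complex" where
  "barnesG_factor m y = (1 + y / of_nat (Suc m)) ^ Suc m * exp (- y + y\<^sup>2 / (2 * of_nat (Suc m)))"

lemma barnesG_eq_prefactor_mult_prod:
  "barnesG z = barnesG_prefactor (z - 1) * (\<Prod>m. barnesG_factor m (z - 1))"
  unfolding barnesG_def barnesG_prefactor_def barnesG_factor_def Let_def ..

lemma barnesG_prefactor_eq_exp_quadratic:
  "barnesG_prefactor y = exp ((of_real (ln (2 * pi)) / 2 - 1 / 2) * y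
                              + (- 1 / 2 - of_real euler_mascheroni / 2) * y\<^sup>2)"
  unfolding barnesG_prefactor_def exp_add[symmetric]
  by (rule arg_cong[where f = exp]) (simp add: field_simps power2_eq_square)

lemma barnesG_factor_eq_exp_quadratic:
  "barnesG_factor m y = (1 + y / of_nat (Suc m)) ^ Suc m
                        * exp ((- 1) * y + (1 / (2 * of_nat (Suc m))) * y\<^sup>2)"
  unfolding barnesG_factor_def by simp

lemma barnesG_factor_eq_weierstrass_factor:
  "barnesG_factor m y = weierstrass_factor 2 (- y / of_nat (Suc m)) ^ Suc m"
proof -
  define s :: complex where "s = of_nat (Suc m)"
  have "s \<noteq> 0" unfolding s_def by (metis of_nat_eq_0_iff nat.distinct(1))
  have "weierstrass_factor 2 u = (1 - u) * exp (u + u\<^sup>2 / 2)" for u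
    by (simp add: weierstrass_factor_def numeral_2_eq_2)
  then have "weierstrass_factor 2 (- y / s) ^ Suc m
      = (1 + y / s) ^ Suc m * exp (- y / s + (- y / s)\<^sup>2 / 2) ^ Suc m"
    by (simp only: power_mult_distrib) simp
  also have "exp (- y / s + (- y / s)\<^sup>2 / 2) ^ Suc m
           = exp (of_nat (Suc m) * (- y / s + (- y / s)\<^sup>2 / 2))"
    by (rule exp_of_nat_mult[symmetric])
  also have "of_nat (Suc m) * (- y / s + (- y / s)\<^sup>2 / 2) = - y + y\<^sup>2 / (2 * s)"
    using \<open>s \<noteq> 0\<close> unfolding s_def[symmetric] by (simp add: field_simps power2_eq_square)
  finally show ?thesis by (simp add: barnesG_factor_def s_def)
qed

lemma barnesG_factor_eq_0_iff: "barnesG_factor m y = 0 \<longleftrightarrow> y = - of_nat (Suc m)"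
proof -
  define s :: complex where "s = of_nat (Suc m)"
  have "s \<noteq> 0" unfolding s_def by (metis of_nat_eq_0_iff nat.distinct(1))
  then have "1 + y / s = 0 \<longleftrightarrow> y = - s" by (auto simp: field_simps eq_neg_iff_add_eq_0 add.commute)
  then show ?thesis unfolding barnesG_factor_def s_def[symmetric] by auto
qed

lemma norm_barnesG_factor_sub_one_le:
  assumes "norm y \<le> R" "2 * R \<le> real (Suc m)"
  shows "norm (barnesG_factor m y - 1) \<le> (3 * R ^ 3) * exp (3 * R ^ 3) / (real (Suc m))\<^sup>2"
proof -
  have "R \<ge> 0" using assms(1) norm_ge_zero[of y] by linarith
  define u where "u = - y / of_nat (Suc m)"
  have nu: "norm u = norm y / real (Suc m)"
    by (simp only: u_def norm_divide norm_minus_cancel norm_of_nat)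
  have "norm u \<le> 1 / 2" unfolding nu using assms by (simp add: field_simps)
  then have "norm (weierstrass_factor 2 u - 1) \<le> 3 * norm u ^ 3"
    using weierstrass_factor_bound[of u 2] by (simp add: numeral_3_eq_3)
  also have "\<dots> \<le> 3 * R ^ 3 / real (Suc m) ^ 3"
    using assms(1) \<open>R \<ge> 0\<close> by (simp add: nu power_divide divide_right_mono power_mono)
  finally show ?thesis
    unfolding barnesG_factor_eq_weierstrass_factor u_def[symmetric]
    by (rule norm_power_sub_one_le_inverse_square) (use \<open>R \<ge> 0\<close> in auto)
qed

lemma convergent_prod_barnesG_factor: "convergent_prod (\<lambda>m. barnesG_factor m y)"
proof -
  have "summable (\<lambda>m. norm (barnesG_factor m y - 1))"
  proof (rule summable_comparison_test_ev)
    show "eventually (\<lambda>m. norm (norm (barnesG_factor m y - 1))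
            \<le> (3 * norm y ^ 3) * exp (3 * norm y ^ 3) / (real (Suc m))\<^sup>2) sequentially"
      using eventually_le_real_sequentially[of "2 * norm y"]
      by eventually_elim (use norm_barnesG_factor_sub_one_le[OF order_refl, of y] in auto)
  qed (rule summable_const_divide_Suc_square)
  then show ?thesis
    using abs_convergent_prod_conv_summable abs_convergent_prod_imp_convergent_prod by blast
qed

lemma prod_barnesG_prefactor_unity_root:
  "n \<ge> 3 \<Longrightarrow> (\<Prod>k<n. barnesG_prefactor (y - unity_root n ^ k * x)) = barnesG_prefactor y ^ n"
  unfolding barnesG_prefactor_eq_exp_quadratic by (rule prod_exp_quadratic_unity_root)

lemma prod_barnesG_factor_unity_root:
  assumes "n \<ge> 3" and "a + of_nat m \<noteq> 0"
  shows "(\<Prod>k<n. barnesG_factor m (a - 1 - unity_root n ^ k * x))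
       = barnesG_factor m (a - 1) ^ n * (1 - x ^ n / (a + of_nat m) ^ n) ^ (m + 1)"
proof -
  define s :: complex where "s = of_nat (Suc m)"
  have "s \<noteq> 0" unfolding s_def by (metis of_nat_eq_0_iff nat.distinct(1))
  define b where "b = (a + of_nat m) / s"
  have shift: "1 + (z - 1) / s = (z + of_nat m) / s" for z
    using \<open>s \<noteq> 0\<close> unfolding s_def by (simp add: field_simps)
  have "1 + (a - 1 - unity_root n ^ k * x) / s = b - unity_root n ^ k * (x / s)" for k
    using shift[of "a - unity_root n ^ k * x"] by (simp add: b_def diff_divide_distrib algebra_simps)
  then have "(\<Prod>k<n. 1 + (a - 1 - unity_root n ^ k * x) / s) = (\<Prod>k<n. b - unity_root n ^ k * (x / s))"
    by (simp only:)
  also have "\<dots> = b ^ n - (x / s) ^ n"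
    using assms(1) by (intro prod_sub_unity_root_mult) simp
  also have "\<dots> = b ^ n * (1 - x ^ n / (a + of_nat m) ^ n)"
    using \<open>s \<noteq> 0\<close> assms(2) by (simp add: b_def field_simps power_divide)
  finally have linear: "(\<Prod>k<n. 1 + (a - 1 - unity_root n ^ k * x) / s)
                      = b ^ n * (1 - x ^ n / (a + of_nat m) ^ n)" .
  have "1 + (a - 1) / s = b" by (simp add: shift b_def)
  have "(\<Prod>k<n. barnesG_factor m (a - 1 - unity_root n ^ k * x))
      = (\<Prod>k<n. 1 + (a - 1 - unity_root n ^ k * x) / s) ^ Suc m
        * (\<Prod>k<n. exp ((- 1) * (a - 1 - unity_root n ^ k * x)
                        + (1 / (2 * s)) * (a - 1 - unity_root n ^ k * x)\<^sup>2))"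
    unfolding barnesG_factor_eq_exp_quadratic s_def[symmetric]
    by (simp only: prod.distrib prod_power_distrib)
  also have "\<dots> = (b ^ n * (1 - x ^ n / (a + of_nat m) ^ n)) ^ Suc m
                   * exp ((- 1) * (a - 1) + (1 / (2 * s)) * (a - 1)\<^sup>2) ^ n"
    by (simp only: linear prod_exp_quadratic_unity_root[OF assms(1)])
  also have "\<dots> = barnesG_factor m (a - 1) ^ n * (1 - x ^ n / (a + of_nat m) ^ n) ^ (m + 1)"
    unfolding barnesG_factor_eq_exp_quadratic s_def[symmetric] \<open>1 + (a - 1) / s = b\<close>
    by (simp add: power_mult_distrib power_mult[symmetric] mult.commute)
  finally show ?thesis .
qed

lemma has_prod_barnesG_unity_root:
  assumes "n \<ge> 3" and "\<And>m. a + of_nat m \<noteq> 0"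
  shows "(\<lambda>m. (1 - x ^ n / (a + of_nat m) ^ n) ^ (m + 1))
           has_prod (\<Prod>k<n. barnesG (a - unity_root n ^ k * x) / barnesG a)"
proof -
  define P where "P y = (\<Prod>m. barnesG_factor m y)" for y
  have factor_nonzero: "barnesG_factor m (a - 1) \<noteq> 0" for m
    using assms(2)[of m] by (auto simp: barnesG_factor_eq_0_iff algebra_simps)
  have "(\<lambda>m. (\<Prod>k<n. barnesG_factor m (a - 1 - unity_root n ^ k * x)) / barnesG_factor m (a - 1) ^ n)
          has_prod ((\<Prod>k<n. P (a - 1 - unity_root n ^ k * x)) / P (a - 1) ^ n)"
    unfolding P_def
    by (intro has_prod_divide has_prod_prod has_prod_power convergent_prod_has_prod
        convergent_prod_barnesG_factor)
  moreover have "(\<Prod>k<n. barnesG_factor m (a - 1 - unity_root n ^ k * x)) / barnesG_factor m (a - 1) ^ n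
               = (1 - x ^ n / (a + of_nat m) ^ n) ^ (m + 1)" for m
    using prod_barnesG_factor_unity_root[OF assms(1) assms(2)] factor_nonzero by simp
  moreover have "(\<Prod>k<n. P (a - 1 - unity_root n ^ k * x)) / P (a - 1) ^ n
               = (\<Prod>k<n. barnesG (a - unity_root n ^ k * x) / barnesG a)"
    using prod_barnesG_prefactor_unity_root[OF assms(1), of "a - 1" x]
    by (simp add: barnesG_eq_prefactor_mult_prod P_def prod_dividef prod.distrib
        power_mult_distrib algebra_simps barnesG_prefactor_def)
  ultimately show ?thesis by simp
qed

lemma norm_unity_root_factor_sub_one_le:
  fixes a x :: complex
  assumes "n \<ge> 3" and "norm x \<le> R" and "2 * norm a + 1 \<le> real m"
  shows "norm ((1 - x ^ n / (a + of_nat m) ^ n) ^ (m + 1) - 1)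
       \<le> (2 * R) ^ n * exp ((2 * R) ^ n) / (real (Suc m))\<^sup>2"
proof -
  define s where "s = real (Suc m)"
  have "s \<ge> 1" by (simp add: s_def)
  have "R \<ge> 0" using assms(2) norm_ge_zero[of x] by linarith
  have "real m \<le> norm (a + of_nat m) + norm a"
    using norm_triangle_ineq4[of "a + of_nat m" a] by (simp add: norm_of_nat)
  then have "s / 2 \<le> norm (a + of_nat m)" using assms(3) by (simp add: s_def)
  then have "norm ((1 - x ^ n / (a + of_nat m) ^ n) - 1) \<le> R ^ n / (s / 2) ^ n"
    using assms(2) \<open>s \<ge> 1\<close> \<open>R \<ge> 0\<close>
    by (simp add: norm_divide norm_power frac_le power_mono)
  also have "\<dots> = (2 * R) ^ n / s ^ n" by (simp add: power_divide power_mult_distrib field_simps)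
  also have "\<dots> \<le> (2 * R) ^ n / s ^ 3"
    using \<open>s \<ge> 1\<close> assms(1) \<open>R \<ge> 0\<close> by (intro divide_left_mono power_increasing) auto
  finally show ?thesis
    unfolding s_def Suc_eq_plus1[symmetric]
    by (rule norm_power_sub_one_le_inverse_square) (use \<open>R \<ge> 0\<close> in auto)
qed

lemma uniform_limit_barnesG_unity_root:
  assumes "n \<ge> 3" and "\<And>m. a + of_nat m \<noteq> 0" and "compact K"
  shows "uniform_limit K (\<lambda>N x. \<Prod>m<N. (1 - x ^ n / (a + of_nat m) ^ n) ^ (m + 1))
           (\<lambda>x. \<Prod>k<n. barnesG (a - unity_root n ^ k * x) / barnesG a) sequentially"
proof -
  obtain R where R: "\<And>x. x \<in> K \<Longrightarrow> norm x \<le> R"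
    using compact_imp_bounded[OF assms(3)] by (auto simp: bounded_iff)
  show ?thesis
  proof (rule uniform_limit_prod_Weierstrass_M[OF assms(3) _ _ summable_const_divide_Suc_square])
    show "continuous_on K (\<lambda>x. (1 - x ^ n / (a + of_nat m) ^ n) ^ (m + 1))" for m
      using assms(2) by (intro continuous_intros) simp
    show "eventually (\<lambda>m. \<forall>x\<in>K. norm ((1 - x ^ n / (a + of_nat m) ^ n) ^ (m + 1) - 1)
            \<le> (2 * R) ^ n * exp ((2 * R) ^ n) / (real (Suc m))\<^sup>2) sequentially"
      using eventually_le_real_sequentially[of "2 * norm a + 1"]
      by eventually_elim (use norm_unity_root_factor_sub_one_le[OF assms(1) R] in blast)
  qed (rule has_prod_barnesG_unity_root[OF assms(1,2)])
qed

theorem mainTheorem7: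
  fixes n :: nat and a :: complex
  assumes "n \<ge> 3"
    and "\<forall>m::nat. a \<noteq> - of_nat m"
  shows "(\<forall>x::complex.
            (\<lambda>m::nat. (1 - x ^ n / (a + of_nat m) ^ n) ^ (m + 1)) has_prod
            (\<Prod>k<n. barnesG (a - exp (2 * of_real pi * \<i> / of_nat n) ^ k * x) / barnesG a))
      \<and> (\<forall>K::complex set. compact K \<longrightarrow>
            uniform_limit K
              (\<lambda>N x. \<Prod>m<N. (1 - x ^ n / (a + of_nat m) ^ n) ^ (m + 1))
              (\<lambda>x. \<Prod>k<n. barnesG (a - exp (2 * of_real pi * \<i> / of_nat n) ^ k * x) / barnesG a)
              sequentially)"
proof -
  have a_nonpole: "a + of_nat m \<noteq> 0" for m
    using assms(2) by (simp add: eq_neg_iff_add_eq_0)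
  show ?thesis
    using has_prod_barnesG_unity_root[OF assms(1) a_nonpole]
      uniform_limit_barnesG_unity_root[OF assms(1) a_nonpole]
    unfolding unity_root_def by blast
qed

end
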